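(* Let $p_1,\dots,p_n\in S^1$ and let $a_1,\dots,a_n$ be nonnegative integers with $a_1+\cdots+a_n$ even. Then the ideal $\mathfrak m_{p_1}^{a_1}\mathfrak m_{p_2}^{a_2}\cdots\mathfrak m_{p_n}^{a_n}$ of $C_{an}(S^1;\mathbf{R})$ is principal.
   Context: $S^1$ is identified with $\mathbf{R}/2\pi\mathbf{Z}$. $C_{an}(S^1;\mathbf{R})$ is the ring (under pointwise operations) of real-valued real-analytic functions on $S^1$, i.e. $2\pi$-periodic real-analytic functions $\mathbf{R}\to\mathbf{R}$. For $p\in S^1$, $\mathfrak m_p=\{f\in C_{an}(S^1;\mathbf{R}): f(p)=0\}$. *)

theory Defs
  imports "HOL-Analysis.Analysis" "HOL-Algebra.Ideal_Product"
begin

definition real_analytic_at :: "(real \<Rightarrow> real) \<Rightarrow> real \<Rightarrow> bool" where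
  "real_analytic_at f x \<longleftrightarrow>
     (\<exists>r>0. \<exists>c :: nat \<Rightarrow> real. \<forall>y. \<bar>y - x\<bar> < r \<longrightarrow> (\<lambda>k. c k * (y - x) ^ k) sums f y)"

text \<open>The ring C_an(S^1;R) of 2pi-periodic real-analytic functions R -> R, pointwise operations.\<close>
definition Can :: "(real \<Rightarrow> real) ring" where
  "Can = \<lparr> carrier = {f. (\<forall>x. f (x + 2 * pi) = f x) \<and> (\<forall>x. real_analytic_at f x)},
           mult = (\<lambda>f g x. f x * g x),
           one = (\<lambda>x. 1),
           zero = (\<lambda>x. 0),
           add = (\<lambda>f g x. f x + g x) \<rparr>"

text \<open>The maximal ideal of functions vanishing at p (p a real representative of a point of S^1).\<close>
definition mideal :: "real \<Rightarrow> (real \<Rightarrow> real) set" where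
  "mideal p = {f \<in> carrier Can. f p = 0}"

definition ideal_power :: "(real \<Rightarrow> real) set \<Rightarrow> nat \<Rightarrow> (real \<Rightarrow> real) set" where
  "ideal_power I k = I [^]\<^bsub>ideals_set Can\<^esub> k"

fun prod_mideals :: "(nat \<Rightarrow> real) \<Rightarrow> (nat \<Rightarrow> nat) \<Rightarrow> nat \<Rightarrow> (real \<Rightarrow> real) set" where
  "prod_mideals p a 0 = carrier Can"
| "prod_mideals p a (Suc n) = ideal_prod Can (prod_mideals p a n) (ideal_power (mideal (p n)) (a n))"

end

theory Submission
  imports Defs "HOL-Complex_Analysis.Complex_Analysis" "HOL-Library.Periodic_Fun"
begin

text \<open>
  Let \<open>s\<^sub>q x = sin ((x - q)/2)\<close>. It vanishes, simply, exactly on \<open>q + 2\<pi>\<int>\<close> and changes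
  sign under \<open>x \<mapsto> x + 2\<pi>\<close>, so \<open>h = \<Prod>\<^sub>i s\<^bsub>p\<^sub>i\<^esub>\<^bsup>a\<^sub>i\<^esup>\<close> is periodic because
  \<open>\<Sum>\<^sub>i a\<^sub>i\<close> is even. A trigonometric identity puts every product \<open>s\<^sub>l s\<^sub>q\<close> into
  \<open>m\<^sub>l m\<^sub>q\<close>; pairing the factors of \<open>h\<close> this way puts \<open>h\<close> into the ideal. Conversely,
  dividing by one half-angle sine at a time, each element of the ideal is \<open>h u\<close> with \<open>u\<close>
  real-analytic, and \<open>u\<close> is periodic off the countable zero set of \<open>h\<close>, hence everywhere.
  Real-analytic functions are handled through their holomorphic extensions to small discs,
  where sums, products and quotients are available.
\<close>

definition holomorphic_extendable_at :: "(real \<Rightarrow> real) \<Rightarrow> real \<Rightarrow> bool" where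
  "holomorphic_extendable_at f x \<longleftrightarrow> (\<exists>F r. r > 0 \<and> F holomorphic_on ball (complex_of_real x) r \<and>
      (\<forall>y. \<bar>y - x\<bar> < r \<longrightarrow> F (of_real y) = of_real (f y)))"

lemma real_analytic_at_imp_holomorphic_extendable:
  assumes "real_analytic_at f x" shows "holomorphic_extendable_at f x"
proof -
  obtain r c where r: "r > 0" and s: "\<And>y. \<bar>y - x\<bar> < r \<Longrightarrow> (\<lambda>k. c k * (y - x) ^ k) sums f y"
    using assms unfolding real_analytic_at_def by blast
  define F where "F w = (\<Sum>k. complex_of_real (c k) * (w - of_real x) ^ k)" for w
  have sums_F: "(\<lambda>k. complex_of_real (c k) * (w - of_real x) ^ k) sums F w"
    if "w \<in> ball (of_real x) r" for w
  proof -
    define \<rho> where "\<rho> = (cmod (w - of_real x) + r) / 2"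
    have "cmod (w - of_real x) < r" "0 \<le> cmod (w - of_real x)"
      using that by (simp_all add: dist_norm norm_minus_commute)
    then have \<rho>: "\<rho> < r" "cmod (w - of_real x) < \<rho>" "0 \<le> \<rho>"
      unfolding \<rho>_def by (auto simp del: norm_ge_zero)
    then have "\<bar>(x + \<rho>) - x\<bar> < r" by simp
    from s[OF this] have "summable (\<lambda>k. c k * \<rho> ^ k)" by (simp add: sums_summable)
    then have "summable (\<lambda>k. complex_of_real (c k * \<rho> ^ k))"
      by (simp only: summable_complex_of_real)
    then have "summable (\<lambda>k. complex_of_real (c k) * (complex_of_real \<rho>) ^ k)"
      by (simp only: of_real_mult of_real_power)
    then have "summable (\<lambda>k. norm (complex_of_real (c k) * (w - of_real x) ^ k))"
      by (rule powser_insidea) (use \<rho> in auto)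
    then show ?thesis unfolding F_def by (rule summable_sums[OF summable_norm_cancel])
  qed
  have "F holomorphic_on ball (of_real x) r"
    by (rule power_series_holomorphic[where a="\<lambda>k. of_real (c k)"]) (use sums_F in auto)
  moreover have "F (of_real y) = of_real (f y)" if y: "\<bar>y - x\<bar> < r" for y
  proof -
    from sums_F[of "of_real y"] y
    have "(\<lambda>k. complex_of_real (c k * (y - x) ^ k)) sums F (of_real y)"
      by (simp add: dist_real_def abs_minus_commute)
    moreover have "(\<lambda>k. complex_of_real (c k * (y - x) ^ k)) sums of_real (f y)"
      by (subst sums_of_real_iff) (rule s[OF y])
    ultimately show ?thesis by (rule sums_unique2)
  qed
  ultimately show ?thesis unfolding holomorphic_extendable_at_def using r by blast
qed

lemma holomorphic_extendable_imp_real_analytic_at: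
  assumes "holomorphic_extendable_at f x" shows "real_analytic_at f x"
proof -
  obtain F r where r: "r > 0" and F: "F holomorphic_on ball (complex_of_real x) r"
    and ext: "\<And>y. \<bar>y - x\<bar> < r \<Longrightarrow> F (of_real y) = of_real (f y)"
    using assms unfolding holomorphic_extendable_at_def by blast
  define d where "d n = (deriv ^^ n) F (of_real x) / fact n" for n
  have series: "(\<lambda>n. Re (d n) * (y - x) ^ n) sums f y" if y: "\<bar>y - x\<bar> < r" for y
  proof -
    have "of_real y \<in> ball (complex_of_real x) r"
      using y by (simp add: dist_real_def abs_minus_commute)
    from holomorphic_power_series[OF F this]
    have "(\<lambda>n. d n * of_real ((y - x) ^ n)) sums of_real (f y)"
      by (simp add: d_def ext[OF y])
    from sums_complex_iff[THEN iffD1, OF this] show ?thesis by simp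
  qed
  show ?thesis unfolding real_analytic_at_def
    by (intro exI[of _ r] conjI exI[of _ "\<lambda>n. Re (d n)"] allI impI r series)
qed

lemma real_analytic_at_iff_holomorphic_extendable:
  "real_analytic_at f x \<longleftrightarrow> holomorphic_extendable_at f x"
  using real_analytic_at_imp_holomorphic_extendable holomorphic_extendable_imp_real_analytic_at
  by blast

lemma holomorphic_extendable_of_entire:
  assumes "F holomorphic_on UNIV" "\<And>y. F (of_real y) = of_real (f y)"
  shows "holomorphic_extendable_at f x"
  unfolding holomorphic_extendable_at_def
  using assms holomorphic_on_subset by (intro exI[of _ F] exI[of _ 1]) auto

lemma holomorphic_extendable_const: "holomorphic_extendable_at (\<lambda>y. c) x"
  by (rule holomorphic_extendable_of_entire[of "\<lambda>w. of_real c"]) auto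

lemma holomorphic_extendable_binop:
  fixes cop :: "complex \<Rightarrow> complex \<Rightarrow> complex" and rop :: "real \<Rightarrow> real \<Rightarrow> real"
  assumes "holomorphic_extendable_at f x" "holomorphic_extendable_at g x"
    and cop: "\<And>A F G. F holomorphic_on A \<Longrightarrow> G holomorphic_on A \<Longrightarrow>
                (\<lambda>w. cop (F w) (G w)) holomorphic_on A"
    and of_real_cop: "\<And>u v. cop (of_real u) (of_real v) = of_real (rop u v)"
  shows "holomorphic_extendable_at (\<lambda>y. rop (f y) (g y)) x"
proof -
  obtain F r where r: "r > 0" and F: "F holomorphic_on ball (complex_of_real x) r"
    and eF: "\<And>y. \<bar>y - x\<bar> < r \<Longrightarrow> F (of_real y) = of_real (f y)"
    using assms(1) unfolding holomorphic_extendable_at_def by blast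
  obtain G s where s: "s > 0" and G: "G holomorphic_on ball (complex_of_real x) s"
    and eG: "\<And>y. \<bar>y - x\<bar> < s \<Longrightarrow> G (of_real y) = of_real (g y)"
    using assms(2) unfolding holomorphic_extendable_at_def by blast
  have "(\<lambda>w. cop (F w) (G w)) holomorphic_on ball (complex_of_real x) (min r s)"
    by (intro cop holomorphic_on_subset[OF F] holomorphic_on_subset[OF G]) auto
  then show ?thesis unfolding holomorphic_extendable_at_def using r s eF eG of_real_cop
    by (intro exI[of _ "\<lambda>w. cop (F w) (G w)"] exI[of _ "min r s"]) auto
qed

lemma holomorphic_extendable_add:
  "holomorphic_extendable_at f x \<Longrightarrow> holomorphic_extendable_at g x \<Longrightarrow>
     holomorphic_extendable_at (\<lambda>y. f y + g y) x"
  by (rule holomorphic_extendable_binop[where cop="(+)"]) (auto intro: holomorphic_intros)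

lemma holomorphic_extendable_mult:
  "holomorphic_extendable_at f x \<Longrightarrow> holomorphic_extendable_at g x \<Longrightarrow>
     holomorphic_extendable_at (\<lambda>y. f y * g y) x"
  by (rule holomorphic_extendable_binop[where cop="(*)"]) (auto intro: holomorphic_intros)

lemma holomorphic_extendable_minus:
  "holomorphic_extendable_at f x \<Longrightarrow> holomorphic_extendable_at (\<lambda>y. - f y) x"
  using holomorphic_extendable_mult[OF holomorphic_extendable_const[of "-1"]] by simp

lemma holomorphic_extendable_imp_isCont:
  assumes "holomorphic_extendable_at f x" shows "isCont f x"
proof -
  obtain F r where r: "r > 0" and F: "F holomorphic_on ball (complex_of_real x) r"
    and ext: "\<And>y. \<bar>y - x\<bar> < r \<Longrightarrow> F (of_real y) = of_real (f y)"
    using assms unfolding holomorphic_extendable_at_def by blast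
  have "isCont F (of_real x)"
    using holomorphic_on_imp_continuous_on[OF F] r by (simp add: continuous_on_eq_continuous_at)
  then have cont: "isCont (\<lambda>y. Re (F (of_real y))) x"
    using isCont_o2[OF continuous_ident[THEN isCont_of_real]] by (intro continuous_Re) blast
  have "\<forall>\<^sub>F y in nhds x. y \<in> ball x r"
    using r by (intro eventually_nhds_in_open) auto
  then have eq: "\<forall>\<^sub>F y in nhds x. Re (F (of_real y)) = f y"
    by (rule eventually_mono) (auto simp: ext dist_real_def abs_minus_commute)
  show ?thesis by (rule iffD1[OF isCont_cong[OF eq] cont])
qed

lemma holomorphic_extendable_cong:
  assumes "holomorphic_extendable_at f x" "\<forall>\<^sub>F y in nhds x. f y = g y"
  shows "holomorphic_extendable_at g x"
proof -
  obtain F r where r: "r > 0" and F: "F holomorphic_on ball (complex_of_real x) r"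
    and ext: "\<And>y. \<bar>y - x\<bar> < r \<Longrightarrow> F (of_real y) = of_real (f y)"
    using assms(1) unfolding holomorphic_extendable_at_def by blast
  obtain e where e: "e > 0" and eq: "\<And>y. dist y x < e \<Longrightarrow> f y = g y"
    using assms(2) unfolding eventually_nhds_metric by blast
  have "F holomorphic_on ball (complex_of_real x) (min r e)"
    by (rule holomorphic_on_subset[OF F]) auto
  then show ?thesis unfolding holomorphic_extendable_at_def using r e ext eq
    by (intro exI[of _ F] exI[of _ "min r e"]) (auto simp: dist_real_def)
qed

lemma holomorphic_extendable_divide:
  assumes f: "holomorphic_extendable_at f x" and g: "holomorphic_extendable_at g x"
    and "g x \<noteq> 0"
  shows "holomorphic_extendable_at (\<lambda>y. f y / g y) x"
proof -
  obtain F r where r: "r > 0" and F: "F holomorphic_on ball (complex_of_real x) r"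
    and eF: "\<And>y. \<bar>y - x\<bar> < r \<Longrightarrow> F (of_real y) = of_real (f y)"
    using f unfolding holomorphic_extendable_at_def by blast
  obtain G s where s: "s > 0" and G: "G holomorphic_on ball (complex_of_real x) s"
    and eG: "\<And>y. \<bar>y - x\<bar> < s \<Longrightarrow> G (of_real y) = of_real (g y)"
    using g unfolding holomorphic_extendable_at_def by blast
  have "isCont G (of_real x)"
    using holomorphic_on_imp_continuous_on[OF G] s by (simp add: continuous_on_eq_continuous_at)
  moreover have "G (of_real x) \<noteq> 0" using eG[of x] s \<open>g x \<noteq> 0\<close> by simp
  ultimately obtain e where e: "e > 0" and G_ne: "\<And>w. dist (of_real x) w < e \<Longrightarrow> G w \<noteq> 0"
    using continuous_at_avoid by blast
  define t where "t = min e (min r s)"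
  have "(\<lambda>w. F w / G w) holomorphic_on ball (of_real x) t"
    by (intro holomorphic_on_divide holomorphic_on_subset[OF F] holomorphic_on_subset[OF G])
       (auto simp: t_def dest: G_ne)
  then show ?thesis unfolding holomorphic_extendable_at_def using r s e eF eG
    by (intro exI[of _ "\<lambda>w. F w / G w"] exI[of _ t]) (auto simp: t_def)
qed

lemma holomorphic_extension_eq_Lim:
  fixes U :: "complex \<Rightarrow> complex"
  assumes U: "U holomorphic_on ball (of_real x) r" and r: "r > 0"
    and ext: "\<And>y. y \<noteq> x \<Longrightarrow> \<bar>y - x\<bar> < r \<Longrightarrow> U (of_real y) = of_real (v y)"
  shows "U (of_real x) = of_real (Lim (at x) v)"
proof -
  have "isCont U (of_real x)"
    using holomorphic_on_imp_continuous_on[OF U] r by (simp add: continuous_on_eq_continuous_at)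
  then have "((\<lambda>y. U (of_real y)) \<longlongrightarrow> U (of_real x)) (at x)"
    using isCont_o2[OF continuous_ident[THEN isCont_of_real]] by (simp add: isCont_def)
  moreover have "\<forall>\<^sub>F y in at x. U (of_real y) = of_real (v y)"
    unfolding eventually_at using r ext by (auto simp: dist_real_def)
  ultimately have lim: "((\<lambda>y. complex_of_real (v y)) \<longlongrightarrow> U (of_real x)) (at x)"
    using tendsto_cong by fastforce
  have "((\<lambda>y. 0) \<longlongrightarrow> Im (U (of_real x))) (at x)"
    using tendsto_Im[OF lim] by simp
  then have "Im (U (of_real x)) = 0"
    using tendsto_unique[OF _ _ tendsto_const] by (metis trivial_limit_at)
  moreover have "Lim (at x) v = Re (U (of_real x))"
    using tendsto_Re[OF lim] by (intro tendsto_Lim) simp_all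
  ultimately show ?thesis by (simp add: complex_eq_iff)
qed

lemma holomorphic_extendable_divide_at_simple_zero:
  fixes S :: "complex \<Rightarrow> complex"
  assumes f: "holomorphic_extendable_at f x" "f x = 0"
    and S: "S holomorphic_on UNIV" "\<And>y. S (of_real y) = of_real (s y)"
    and zero: "s x = 0" "deriv S (of_real x) \<noteq> 0"
  shows "holomorphic_extendable_at
           (\<lambda>y. if s y = 0 then Lim (at y) (\<lambda>t. f t / s t) else f y / s y) x"
proof -
  define z where "z = complex_of_real x"
  obtain F r where r: "r > 0" and F: "F holomorphic_on ball z r"
    and ext: "\<And>y. \<bar>y - x\<bar> < r \<Longrightarrow> F (of_real y) = of_real (f y)"
    using f(1) unfolding holomorphic_extendable_at_def z_def by blast
  have Fz: "F z = 0" and Sz: "S z = 0"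
    using ext[of x] r f(2) S(2)[of x] zero(1) by (simp_all add: z_def)
  \<comment> \<open>Divided differences remove the common zero of numerator and denominator.\<close>
  define F' where "F' w = (if w = z then deriv F z else (F w - F z) / (w - z))" for w
  define S' where "S' w = (if w = z then deriv S z else (S w - S z) / (w - z))" for w
  have F': "F' holomorphic_on ball z r"
    unfolding F'_def by (rule pole_lemma[OF F]) (use r in simp)
  have S': "S' holomorphic_on UNIV"
    unfolding S'_def by (rule pole_lemma[OF S(1)]) simp
  have "isCont S' z"
    using holomorphic_on_imp_continuous_on[OF S'] by (simp add: continuous_on_eq_continuous_at)
  moreover have "S' z \<noteq> 0" using zero(2) by (simp add: S'_def z_def)
  ultimately obtain e where e: "e > 0" and S'_ne: "\<And>w. dist z w < e \<Longrightarrow> S' w \<noteq> 0"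
    using continuous_at_avoid by blast
  define t where "t = min r e"
  have t: "t > 0" using r e by (simp add: t_def)
  have U: "(\<lambda>w. F' w / S' w) holomorphic_on ball z t"
    by (intro holomorphic_on_divide holomorphic_on_subset[OF F'] holomorphic_on_subset[OF S'])
       (auto simp: t_def dest: S'_ne)
  have near: "s y \<noteq> 0 \<and> F' (of_real y) / S' (of_real y) = of_real (f y / s y)"
    if y: "y \<noteq> x" "\<bar>y - x\<bar> < t" for y
  proof -
    have yz: "complex_of_real y \<noteq> z" using y by (simp add: z_def)
    have "S' (of_real y) \<noteq> 0"
      using S'_ne[of "of_real y"] y by (simp add: t_def z_def dist_real_def abs_minus_commute)
    then have "S (of_real y) \<noteq> 0" using yz by (simp add: S'_def Sz)
    then show ?thesis
      using yz y ext[of y] S(2)[of y] by (simp add: F'_def S'_def Fz Sz t_def)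
  qed
  have "F' z / S' z = of_real (Lim (at x) (\<lambda>t. f t / s t))"
    using holomorphic_extension_eq_Lim[OF U[unfolded z_def] t] near by (simp add: z_def)
  then have "F' (of_real y) / S' (of_real y)
      = of_real (if s y = 0 then Lim (at y) (\<lambda>t. f t / s t) else f y / s y)"
    if "\<bar>y - x\<bar> < t" for y
    using near[OF _ that] zero(1) by (cases "y = x") (simp_all add: z_def)
  then show ?thesis unfolding holomorphic_extendable_at_def using t U
    by (intro exI[of _ "\<lambda>w. F' w / S' w"] exI[of _ t]) (simp add: z_def)
qed

lemma holomorphic_extendable_divide_simple_zeros:
  fixes S :: "complex \<Rightarrow> complex"
  assumes f: "holomorphic_extendable_at f x" "s x = 0 \<Longrightarrow> f x = 0"
    and S: "S holomorphic_on UNIV" "\<And>y. S (of_real y) = of_real (s y)"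
    and simple: "s x = 0 \<Longrightarrow> deriv S (of_real x) \<noteq> 0"
  shows "holomorphic_extendable_at
           (\<lambda>y. if s y = 0 then Lim (at y) (\<lambda>t. f t / s t) else f y / s y) x"
proof (cases "s x = 0")
  case True
  then show ?thesis using holomorphic_extendable_divide_at_simple_zero f S simple by blast
next
  case False
  have s: "holomorphic_extendable_at s x" by (rule holomorphic_extendable_of_entire[OF S])
  then obtain e where "e > 0" "\<And>y. dist x y < e \<Longrightarrow> s y \<noteq> 0"
    using continuous_at_avoid[OF holomorphic_extendable_imp_isCont[OF s] False] by blast
  then have "\<forall>\<^sub>F y in nhds x. s y \<noteq> 0"
    unfolding eventually_nhds_metric by (metis dist_commute)
  then have "\<forall>\<^sub>F y in nhds x. f y / s y
      = (if s y = 0 then Lim (at y) (\<lambda>t. f t / s t) else f y / s y)"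
    by (rule eventually_mono) simp
  then show ?thesis
    by (rule holomorphic_extendable_cong[OF holomorphic_extendable_divide[OF f(1) s False]])
qed

lemma real_analytic_at_const: "real_analytic_at (\<lambda>y. c) x"
  by (simp add: real_analytic_at_iff_holomorphic_extendable holomorphic_extendable_const)

lemma real_analytic_at_add:
  "real_analytic_at f x \<Longrightarrow> real_analytic_at g x \<Longrightarrow> real_analytic_at (\<lambda>y. f y + g y) x"
  by (simp add: real_analytic_at_iff_holomorphic_extendable holomorphic_extendable_add)

lemma real_analytic_at_mult:
  "real_analytic_at f x \<Longrightarrow> real_analytic_at g x \<Longrightarrow> real_analytic_at (\<lambda>y. f y * g y) x"
  by (simp add: real_analytic_at_iff_holomorphic_extendable holomorphic_extendable_mult)

lemma real_analytic_at_minus: "real_analytic_at f x \<Longrightarrow> real_analytic_at (\<lambda>y. - f y) x"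
  by (simp add: real_analytic_at_iff_holomorphic_extendable holomorphic_extendable_minus)

lemma real_analytic_at_imp_isCont: "real_analytic_at f x \<Longrightarrow> isCont f x"
  by (simp add: real_analytic_at_iff_holomorphic_extendable holomorphic_extendable_imp_isCont)

lemma real_analytic_at_divide_simple_zeros:
  fixes S :: "complex \<Rightarrow> complex"
  assumes "real_analytic_at f x" "s x = 0 \<Longrightarrow> f x = 0"
    and "S holomorphic_on UNIV" "\<And>y. S (of_real y) = of_real (s y)"
    and "s x = 0 \<Longrightarrow> deriv S (of_real x) \<noteq> 0"
  shows "real_analytic_at (\<lambda>y. if s y = 0 then Lim (at y) (\<lambda>t. f t / s t) else f y / s y) x"
  using holomorphic_extendable_divide_simple_zeros[of f x s S] assms
  unfolding real_analytic_at_iff_holomorphic_extendable by blast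

definition half_sine :: "real \<Rightarrow> real \<Rightarrow> real" where
  "half_sine q x = sin ((x - q) / 2)"

definition half_cosine :: "real \<Rightarrow> real \<Rightarrow> real" where
  "half_cosine q x = cos ((x - q) / 2)"

lemma real_analytic_at_half_sine: "real_analytic_at (half_sine q) x"
  unfolding real_analytic_at_iff_holomorphic_extendable half_sine_def[abs_def]
  by (rule holomorphic_extendable_of_entire[of "\<lambda>w. sin ((w - of_real q) / 2)"])
     (auto intro!: holomorphic_intros simp flip: sin_of_real)

lemma real_analytic_at_half_cosine: "real_analytic_at (half_cosine q) x"
  unfolding real_analytic_at_iff_holomorphic_extendable half_cosine_def[abs_def]
  by (rule holomorphic_extendable_of_entire[of "\<lambda>w. cos ((w - of_real q) / 2)"])
     (auto intro!: holomorphic_intros simp flip: cos_of_real)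

lemma half_sine_shift: "half_sine q (x + 2 * pi) = - half_sine q x"
proof -
  have "(x + 2 * pi - q) / 2 = (x - q) / 2 + pi" by (simp add: field_simps)
  then show ?thesis unfolding half_sine_def by (simp only: sin_periodic_pi)
qed

lemma half_cosine_shift: "half_cosine q (x + 2 * pi) = - half_cosine q x"
proof -
  have "(x + 2 * pi - q) / 2 = (x - q) / 2 + pi" by (simp add: field_simps)
  then show ?thesis unfolding half_cosine_def by (simp only: cos_periodic_pi)
qed

lemma half_sine_self: "half_sine q q = 0"
  by (simp add: half_sine_def)

lemma half_sine_eq_0_iff: "half_sine q x = 0 \<longleftrightarrow> (\<exists>k::int. x = q + of_int k * (2 * pi))"
proof
  assume "half_sine q x = 0"
  then obtain k :: int where "(x - q) / 2 = of_int k * pi"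
    unfolding half_sine_def using sin_zero_iff_int2 by blast
  then have "x = q + of_int k * (2 * pi)" by (simp add: field_simps)
  then show "\<exists>k::int. x = q + of_int k * (2 * pi)" ..
next
  assume "\<exists>k::int. x = q + of_int k * (2 * pi)"
  then obtain k :: int where "x = q + of_int k * (2 * pi)" ..
  then have "(x - q) / 2 = of_int k * pi" by simp
  then show "half_sine q x = 0" by (simp add: half_sine_def sin_zero_iff_int2)
qed

lemma carrier_Can:
  "f \<in> carrier Can \<longleftrightarrow> (\<forall>x. f (x + 2 * pi) = f x) \<and> (\<forall>x. real_analytic_at f x)"
  by (simp add: Can_def)

lemma Can_ops:
  "mult Can = (\<lambda>f g x. f x * g x)" "add Can = (\<lambda>f g x. f x + g x)"
  "one Can = (\<lambda>x. 1)" "zero Can = (\<lambda>x. 0)"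
  by (simp_all add: Can_def)

lemma const_in_carrier_Can: "(\<lambda>x. c) \<in> carrier Can"
  by (simp add: carrier_Can real_analytic_at_const)

lemma Can_cring: "cring Can"
proof (rule cringI)
  show "abelian_group Can"
  proof (rule abelian_groupI)
    fix f assume f: "f \<in> carrier Can"
    show "\<exists>g\<in>carrier Can. g \<oplus>\<^bsub>Can\<^esub> f = \<zero>\<^bsub>Can\<^esub>"
    proof
      show "(\<lambda>x. - f x) \<in> carrier Can"
        using f by (simp add: carrier_Can real_analytic_at_minus)
    qed (simp add: Can_ops)
  qed (auto simp: carrier_Can Can_ops fun_eq_iff algebra_simps real_analytic_at_add
            real_analytic_at_const)
  show "comm_monoid Can"
    by (rule comm_monoidI)
       (auto simp: carrier_Can Can_ops fun_eq_iff real_analytic_at_mult real_analytic_at_const)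
qed (auto simp: Can_ops fun_eq_iff algebra_simps)

interpretation Can: cring Can
  by (rule Can_cring)

lemma (in cring) idealI_closed:
  assumes "I \<subseteq> carrier R" "\<zero> \<in> I" "\<And>a b. a \<in> I \<Longrightarrow> b \<in> I \<Longrightarrow> a \<oplus> b \<in> I"
    "\<And>a x. a \<in> I \<Longrightarrow> x \<in> carrier R \<Longrightarrow> x \<otimes> a \<in> I"
  shows "ideal I R"
proof (rule idealI[OF ring_axioms])
  show "subgroup I (add_monoid R)"
  proof (rule add.subgroupI)
    fix a assume a: "a \<in> I"
    then have "\<ominus> a = (\<ominus> \<one>) \<otimes> a" using assms(1) by (auto simp: l_minus)
    then show "\<ominus> a \<in> I" using assms(4)[OF a] by simp
  qed (use assms in auto)
next
  fix a x assume "a \<in> I" "x \<in> carrier R"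
  then show "x \<otimes> a \<in> I" "a \<otimes> x \<in> I"
    using assms(1,4) m_comm by (auto simp: subset_iff)
qed

lemma mideal_ideal: "ideal (mideal q) Can"
  by (rule Can.idealI_closed)
     (auto simp: mideal_def Can_ops carrier_Can real_analytic_at_add real_analytic_at_mult
           real_analytic_at_const)

lemma ideal_power_0: "ideal_power I 0 = carrier Can"
  by (simp add: ideal_power_def ideals_set_def)

lemma ideal_power_Suc: "ideal_power I (Suc k) = ideal_prod Can (ideal_power I k) I"
  by (simp add: ideal_power_def ideals_set_def)

lemma ideal_power_ideal: "ideal I Can \<Longrightarrow> ideal (ideal_power I k) Can"
  by (induction k)
     (simp_all add: ideal_power_0 ideal_power_Suc Can.oneideal Can.ideal_prod_is_ideal)

lemma prod_mideals_ideal: "ideal (prod_mideals p a n) Can"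
  by (induction n)
     (simp_all add: Can.oneideal Can.ideal_prod_is_ideal ideal_power_ideal mideal_ideal)

lemma Can_ideal_add: "ideal I Can \<Longrightarrow> f \<in> I \<Longrightarrow> g \<in> I \<Longrightarrow> (\<lambda>x. f x + g x) \<in> I"
  using additive_subgroup.a_closed[OF ideal.axioms(1)] by (fastforce simp: Can_ops)

lemma Can_ideal_scale: "ideal I Can \<Longrightarrow> f \<in> I \<Longrightarrow> (\<lambda>x. c * f x) \<in> I"
  using ideal.I_l_closed[OF _ _ const_in_carrier_Can] by (fastforce simp: Can_ops)

lemma Can_ideal_prod_mult: "f \<in> I \<Longrightarrow> g \<in> J \<Longrightarrow> (\<lambda>x. f x * g x) \<in> ideal_prod Can I J"
  using ideal_prod.prod[of f I g J Can] by (simp add: Can_ops)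

lemma half_sine_mult_half_cosine_in_mideal: "(\<lambda>x. half_sine q x * half_cosine q x) \<in> mideal q"
  unfolding mideal_def carrier_Can
  by (auto intro!: real_analytic_at_mult real_analytic_at_half_sine real_analytic_at_half_cosine
      simp: half_sine_shift half_cosine_shift half_sine_self)

lemma half_sine_square_in_mideal: "(\<lambda>x. half_sine q x * half_sine q x) \<in> mideal q"
  unfolding mideal_def carrier_Can
  by (auto intro!: real_analytic_at_mult real_analytic_at_half_sine
      simp: half_sine_shift half_sine_self)

text \<open>
  With \<open>A\<^sub>q = s\<^sub>q c\<^sub>q\<close>, \<open>B\<^sub>q = s\<^sub>q\<^sup>2\<close> (\<open>c\<^sub>q\<close> the half-angle cosine) and
  \<open>d = (l - q)/2\<close>: \<open>s\<^sub>l s\<^sub>q = cos d (A\<^sub>l A\<^sub>q + B\<^sub>l B\<^sub>q) + sin d (A\<^sub>l B\<^sub>q - B\<^sub>l A\<^sub>q)\<close>,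
  because the two brackets are \<open>s\<^sub>l s\<^sub>q cos d\<close> and \<open>s\<^sub>l s\<^sub>q sin d\<close>.
\<close>
lemma half_sine_mult_in_mideal_prod:
  "(\<lambda>x. half_sine l x * half_sine q x) \<in> ideal_prod Can (mideal l) (mideal q)"
proof -
  let ?P = "ideal_prod Can (mideal l) (mideal q)"
  have P: "ideal ?P Can" by (intro Can.ideal_prod_is_ideal mideal_ideal)
  let ?d = "(l - q) / 2"
  define A where "A q' x = half_sine q' x * half_cosine q' x" for q' x
  define B where "B q' x = half_sine q' x * half_sine q' x" for q' x
  have AB: "A l \<in> mideal l" "B l \<in> mideal l" "A q \<in> mideal q" "B q \<in> mideal q"
    unfolding A_def B_def
    by (simp_all add: half_sine_mult_half_cosine_in_mideal half_sine_square_in_mideal)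
  have "(\<lambda>x. cos ?d * (A l x * A q x) + cos ?d * (B l x * B q x)
          + (sin ?d * (A l x * B q x) + (- sin ?d) * (B l x * A q x))) \<in> ?P"
    by (intro Can_ideal_add[OF P] Can_ideal_scale[OF P] Can_ideal_prod_mult AB)
  moreover have "cos ?d * (A l x * A q x) + cos ?d * (B l x * B q x)
          + (sin ?d * (A l x * B q x) + (- sin ?d) * (B l x * A q x))
        = half_sine l x * half_sine q x" for x
  proof -
    have d: "?d = (x - q) / 2 - (x - l) / 2" by (simp add: field_simps)
    have trig: "cos ?d = half_cosine l x * half_cosine q x + half_sine l x * half_sine q x"
      "sin ?d = half_cosine l x * half_sine q x - half_sine l x * half_cosine q x"
      unfolding d cos_diff sin_diff half_sine_def half_cosine_def by (simp_all add: ac_simps)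
    have "cos ?d * (A l x * A q x) + cos ?d * (B l x * B q x)
          + (sin ?d * (A l x * B q x) + (- sin ?d) * (B l x * A q x))
        = half_sine l x * half_sine q x
          * (cos ?d * (half_cosine l x * half_cosine q x + half_sine l x * half_sine q x)
             + sin ?d * (half_cosine l x * half_sine q x - half_sine l x * half_cosine q x))"
      unfolding A_def B_def by (simp add: algebra_simps)
    also have "\<dots> = half_sine l x * half_sine q x * ((sin ?d)\<^sup>2 + (cos ?d)\<^sup>2)"
      unfolding trig[symmetric] by (simp only: power2_eq_square add.commute)
    finally show ?thesis by (simp only: sin_cos_squared_add mult_1_right)
  qed
  ultimately show ?thesis by simp
qed

definition sine_monomial :: "(nat \<Rightarrow> real) \<Rightarrow> (nat \<Rightarrow> nat) \<Rightarrow> nat \<Rightarrow> real \<Rightarrow> real" where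
  "sine_monomial p a n x = (\<Prod>i<n. half_sine (p i) x ^ a i)"

text \<open>
  An odd-degree monomial is antiperiodic, hence not even an element of \<open>Can\<close>; for odd degree
  the induction carries what one more half-angle sine and one more maximal ideal give.
\<close>
definition member_up_to_half_sine :: "(real \<Rightarrow> real) set \<Rightarrow> (real \<Rightarrow> real) \<Rightarrow> nat \<Rightarrow> bool" where
  "member_up_to_half_sine I h k \<longleftrightarrow> (even k \<longrightarrow> h \<in> I) \<and>
     (odd k \<longrightarrow> (\<forall>q. (\<lambda>x. h x * half_sine q x) \<in> ideal_prod Can I (mideal q)))"

lemma member_up_to_half_sine_mult:
  assumes I: "ideal I Can" and h: "member_up_to_half_sine I h k"
  shows "member_up_to_half_sine (ideal_prod Can I (mideal l)) (\<lambda>x. h x * half_sine l x) (Suc k)"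
  unfolding member_up_to_half_sine_def
proof (intro conjI impI allI)
  assume "even (Suc k)"
  then show "(\<lambda>x. h x * half_sine l x) \<in> ideal_prod Can I (mideal l)"
    using h by (simp add: member_up_to_half_sine_def)
next
  fix q assume "odd (Suc k)"
  then have "h \<in> I" using h by (simp add: member_up_to_half_sine_def)
  then have "(\<lambda>x. h x * (half_sine l x * half_sine q x))
      \<in> ideal_prod Can I (ideal_prod Can (mideal l) (mideal q))"
    by (intro Can_ideal_prod_mult half_sine_mult_in_mideal_prod)
  also have "ideal_prod Can I (ideal_prod Can (mideal l) (mideal q))
      = ideal_prod Can (ideal_prod Can I (mideal l)) (mideal q)"
    by (rule Can.ideal_prod_assoc[symmetric]) (simp_all add: I mideal_ideal)
  finally show "(\<lambda>x. h x * half_sine l x * half_sine q x)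
      \<in> ideal_prod Can (ideal_prod Can I (mideal l)) (mideal q)"
    by (simp add: mult.assoc)
qed

lemma member_up_to_half_sine_power:
  assumes I: "ideal I Can" and h: "member_up_to_half_sine I h k"
  shows "member_up_to_half_sine (ideal_prod Can I (ideal_power (mideal l) b))
           (\<lambda>x. h x * half_sine l x ^ b) (k + b)"
proof (induction b)
  case 0
  then show ?case using h by (simp add: ideal_power_0 Can.ideal_prod_one I)
next
  case (Suc b)
  have "ideal_prod Can I (ideal_power (mideal l) (Suc b))
      = ideal_prod Can (ideal_prod Can I (ideal_power (mideal l) b)) (mideal l)"
    unfolding ideal_power_Suc
    by (rule Can.ideal_prod_assoc[symmetric]) (simp_all add: I mideal_ideal ideal_power_ideal)
  moreover have "ideal (ideal_prod Can I (ideal_power (mideal l) b)) Can"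
    by (simp add: Can.ideal_prod_is_ideal I mideal_ideal ideal_power_ideal)
  ultimately show ?case
    using member_up_to_half_sine_mult[OF _ Suc, of l] by (simp add: ac_simps)
qed

lemma member_up_to_half_sine_prod_mideals:
  "member_up_to_half_sine (prod_mideals p a n) (sine_monomial p a n) (\<Sum>i<n. a i)"
proof (induction n)
  case 0
  show ?case
    using const_in_carrier_Can[of 1] by (simp add: member_up_to_half_sine_def sine_monomial_def)
next
  case (Suc n)
  from member_up_to_half_sine_power[OF prod_mideals_ideal Suc, of "p n" "a n"]
  show ?case by (simp add: sine_monomial_def[abs_def])
qed

lemma sine_monomial_in_prod_mideals:
  "even (\<Sum>i<n. a i) \<Longrightarrow> sine_monomial p a n \<in> prod_mideals p a n"
  using member_up_to_half_sine_prod_mideals by (simp add: member_up_to_half_sine_def)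

definition analytic_multiples :: "(real \<Rightarrow> real) \<Rightarrow> (real \<Rightarrow> real) set" where
  "analytic_multiples h = {g. \<exists>u. (\<forall>x. real_analytic_at u x) \<and> (\<forall>x. g x = h x * u x)}"

lemma carrier_Can_subset_analytic_multiples: "carrier Can \<subseteq> analytic_multiples (\<lambda>x. 1)"
proof
  fix g assume "g \<in> carrier Can"
  then have "\<forall>x. real_analytic_at g x" by (simp add: carrier_Can)
  then show "g \<in> analytic_multiples (\<lambda>x. 1)" unfolding analytic_multiples_def by auto
qed

lemma ideal_prod_subset_analytic_multiples:
  assumes "I \<subseteq> analytic_multiples h" "J \<subseteq> analytic_multiples h'"
  shows "ideal_prod Can I J \<subseteq> analytic_multiples (\<lambda>x. h x * h' x)"
proof
  fix g assume "g \<in> ideal_prod Can I J"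
  then show "g \<in> analytic_multiples (\<lambda>x. h x * h' x)"
  proof (induction g rule: ideal_prod.induct)
    case (prod f f')
    obtain u u' where "\<forall>x. real_analytic_at u x" "\<forall>x. f x = h x * u x"
      "\<forall>x. real_analytic_at u' x" "\<forall>x. f' x = h' x * u' x"
      using prod assms by (force simp: analytic_multiples_def)
    then show ?case unfolding analytic_multiples_def Can_ops
      by (intro CollectI exI[of _ "\<lambda>x. u x * u' x"]) (auto intro!: real_analytic_at_mult simp: ac_simps)
  next
    case (sum g g')
    obtain u u' where "\<forall>x. real_analytic_at u x" "\<forall>x. g x = h x * h' x * u x"
      "\<forall>x. real_analytic_at u' x" "\<forall>x. g' x = h x * h' x * u' x"
      using sum.IH by (force simp: analytic_multiples_def)
    then show ?case unfolding analytic_multiples_def Can_ops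
      by (intro CollectI exI[of _ "\<lambda>x. u x + u' x"]) (auto intro!: real_analytic_at_add simp: algebra_simps)
  qed
qed

text \<open>
  Division by \<open>s\<^sub>q\<close> is possible because \<open>s\<^sub>q\<close> is the restriction of an entire function with
  simple zeros, all of them on \<open>q + 2\<pi>\<int>\<close>, where a periodic function vanishing at \<open>q\<close>
  vanishes too. The quotient is real-analytic but in general only antiperiodic.
\<close>
lemma mideal_subset_analytic_multiples: "mideal q \<subseteq> analytic_multiples (half_sine q)"
proof
  fix g assume "g \<in> mideal q"
  then have g: "\<forall>x. g (x + 2 * pi) = g x" "\<And>x. real_analytic_at g x" "g q = 0"
    by (auto simp: mideal_def carrier_Can)
  interpret periodic_fun_simple g "2 * pi" by standard (use g(1) in blast)
  define S where "S w = sin ((w - complex_of_real q) / 2)" for w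
  define u where "u y = (if half_sine q y = 0 then Lim (at y) (\<lambda>t. g t / half_sine q t)
                         else g y / half_sine q y)" for y
  have S: "S holomorphic_on UNIV" "\<And>y. S (of_real y) = of_real (half_sine q y)"
    unfolding S_def half_sine_def by (auto intro!: holomorphic_intros simp flip: sin_of_real)
  have "real_analytic_at u x" for x
    unfolding u_def
  proof (rule real_analytic_at_divide_simple_zeros[OF g(2) _ S])
    assume "half_sine q x = 0"
    then obtain k :: int where x: "x = q + of_int k * (2 * pi)"
      using half_sine_eq_0_iff by blast
    show "g x = 0" using plus_of_int[of q k] g(3) by (simp add: x)
    have "(S has_field_derivative cos ((of_real x - of_real q) / 2) / 2) (at (of_real x))"
      unfolding S_def by (auto intro!: derivative_eq_intros)
    then have "deriv S (of_real x) = of_real (cos ((x - q) / 2) / 2)"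
      by (simp add: DERIV_imp_deriv flip: cos_of_real)
    moreover have "cos ((x - q) / 2) \<noteq> 0"
      using \<open>half_sine q x = 0\<close> sin_cos_squared_add[of "(x - q) / 2"] by (auto simp: half_sine_def)
    ultimately show "deriv S (of_real x) \<noteq> 0"
      by (metis divide_eq_0_iff of_real_eq_0_iff zero_neq_numeral)
  qed
  moreover have "g x = half_sine q x * u x" for x
  proof (cases "half_sine q x = 0")
    case True
    then obtain k :: int where "x = q + of_int k * (2 * pi)"
      using half_sine_eq_0_iff by blast
    then show ?thesis using True plus_of_int[of q k] g(3) by simp
  qed (simp add: u_def)
  ultimately show "g \<in> analytic_multiples (half_sine q)"
    unfolding analytic_multiples_def by blast
qed

lemma ideal_power_mideal_subset_analytic_multiples:
  "ideal_power (mideal q) b \<subseteq> analytic_multiples (\<lambda>x. half_sine q x ^ b)"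
proof (induction b)
  case 0
  show ?case using carrier_Can_subset_analytic_multiples by (simp add: ideal_power_0)
next
  case (Suc b)
  show ?case unfolding ideal_power_Suc
    using ideal_prod_subset_analytic_multiples[OF Suc mideal_subset_analytic_multiples]
    by (simp add: mult.commute)
qed

lemma prod_mideals_subset_analytic_multiples:
  "prod_mideals p a n \<subseteq> analytic_multiples (sine_monomial p a n)"
proof (induction n)
  case 0
  show ?case using carrier_Can_subset_analytic_multiples by (simp add: sine_monomial_def)
next
  case (Suc n)
  show ?case
    using ideal_prod_subset_analytic_multiples[OF Suc ideal_power_mideal_subset_analytic_multiples]
    by (simp add: sine_monomial_def[abs_def])
qed

lemma countable_sine_monomial_zeros: "countable {x. sine_monomial p a n x = 0}"
proof (rule countable_subset)
  show "{x. sine_monomial p a n x = 0} \<subseteq> (\<Union>i<n. range (\<lambda>k::int. p i + of_int k * (2 * pi)))"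
    by (auto simp: sine_monomial_def half_sine_eq_0_iff)
qed auto

lemma periodic_factor:
  fixes h g u :: "real \<Rightarrow> real"
  assumes h: "\<And>x. h (x + T) = h x" and g: "\<And>x. g (x + T) = g x"
    and u: "\<And>x. isCont u x" and factor: "\<And>x. g x = h x * u x"
    and zeros: "countable {x. h x = 0}"
  shows "u (x + T) = u x"
proof (rule ccontr)
  assume "u (x + T) \<noteq> u x"
  moreover have "isCont (\<lambda>y. u (y + T) - u y) x"
    using u by (intro continuous_intros isCont_o2[OF _ u])
  ultimately obtain e where e: "e > 0" and ne: "\<And>y. dist x y < e \<Longrightarrow> u (y + T) - u y \<noteq> 0"
    using continuous_at_avoid[of x "\<lambda>y. u (y + T) - u y" 0] by auto
  have "ball x e \<subseteq> {x. h x = 0}"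
  proof
    fix y assume "y \<in> ball x e"
    moreover have "h y * (u (y + T) - u y) = 0"
      using factor[of "y + T"] factor[of y] g[of y] h[of y] by (simp add: algebra_simps)
    ultimately show "y \<in> {x. h x = 0}" using ne by simp
  qed
  then have "countable (ball x e)" using zeros countable_subset by blast
  then show False using uncountable_ball[OF e] by blast
qed

lemma analytic_multiples_subset_cgenideal:
  assumes h: "h \<in> carrier Can" and zeros: "countable {x. h x = 0}"
  shows "carrier Can \<inter> analytic_multiples h \<subseteq> PIdl\<^bsub>Can\<^esub> h"
proof
  fix g assume "g \<in> carrier Can \<inter> analytic_multiples h"
  then obtain u where g: "g \<in> carrier Can" and u: "\<And>x. real_analytic_at u x"
    and factor: "\<And>x. g x = h x * u x"
    by (auto simp: analytic_multiples_def)
  have "u (x + 2 * pi) = u x" for x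
    using h g by (intro periodic_factor[OF _ _ real_analytic_at_imp_isCont[OF u] factor zeros])
       (simp_all add: carrier_Can)
  then have "u \<in> carrier Can" using u by (simp add: carrier_Can)
  moreover have "g = u \<otimes>\<^bsub>Can\<^esub> h" using factor by (simp add: Can_ops fun_eq_iff mult.commute)
  ultimately show "g \<in> PIdl\<^bsub>Can\<^esub> h" unfolding cgenideal_def by blast
qed

theorem corollary1:
  fixes p :: "nat \<Rightarrow> real" and a :: "nat \<Rightarrow> nat" and n :: nat
  assumes "even (\<Sum>i<n. a i)"
  shows "principalideal (prod_mideals p a n) Can"
proof -
  let ?I = "prod_mideals p a n" and ?h = "sine_monomial p a n"
  have I: "ideal ?I Can" by (rule prod_mideals_ideal)
  have h: "?h \<in> ?I" using assms by (rule sine_monomial_in_prod_mideals)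
  then have h_carrier: "?h \<in> carrier Can" using ideal.Icarr[OF I] by blast
  have "?I \<subseteq> carrier Can \<inter> analytic_multiples ?h"
    using ideal.Icarr[OF I] prod_mideals_subset_analytic_multiples by blast
  also have "\<dots> \<subseteq> PIdl\<^bsub>Can\<^esub> ?h"
    by (rule analytic_multiples_subset_cgenideal[OF h_carrier countable_sine_monomial_zeros])
  finally have "?I = PIdl\<^bsub>Can\<^esub> ?h"
    using Can.cgenideal_minimal[OF I h] by blast
  then show ?thesis using Can.cgenideal_is_principalideal[OF h_carrier] by simp
qed

end
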